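(* Let $T:I\to I$, $I=[0,1]$, be a piecewise expanding map as in the context satisfying (PE1)–(PE4), with absolutely continuous invariant ergodic probability measure $\mu$. Then $\mu$-almost every point $x\in I$ is Diophantine, i.e. there exist $\epsilon=\epsilon(x)>0$ and $\rho_0=\rho_0(x)>0$ such that for all $\rho\le\rho_0$ and all integers $0<k\le\epsilon|\ln\rho|$, $T^{-k}B(x,\rho)\cap B(x,\rho)=\emptyset$.
   Context: $T$ has a finite or countable set of singular points $\mathcal{S}=\{a_j\}$, $1=a_0>a_1>\cdots>a_N=0$ ($N\le\infty$); on each $\Delta_j=(a_{j+1},a_j)$, $T$ is $C^3$ and strictly monotone; there are $C>0$, $\lambda>1$ with $|(T^n)'(x)|\ge C\lambda^n$ whenever defined; $T$ is surjective and topologically exact (every subinterval $J\subset I\setminus\mathcal{S}$ has $T^n(J)=I$ for some $n\ge1$). $m$ is Lebesgue measure, $d$ the usual distance, $B(x,\rho)=\{y:d(x,y)<\rho\}$. (PE1) there is $C>0$ with $|T''(x)|/|T'(x)|^2<C$ for all $i$, $x\in\Delta_i$; (PE2) there is $\delta>0$ with $m(T(\Delta_i))>\delta$ for all $i$; under these $T$ has a unique absolutely continuous ergodic invariant probability measure $\mu$; (PE3) $\int\log|T'|\,d\mu=\Lambda_0<\infty$; (PE4) $\mu(\{x:d(x,\mathcal{S})<\varepsilon\})<C\varepsilon^\gamma$ for some $C,\gamma>0$ and all $\varepsilon>0$. *)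

theory Defs
  imports "HOL-Probability.Probability"
begin

abbreviation unit_I :: "real set" where "unit_I \<equiv> {0..1}"

definition sing_points_ok :: "(nat \<Rightarrow> real) \<Rightarrow> enat \<Rightarrow> bool" where
  "sing_points_ok a N \<longleftrightarrow>
     a 0 = 1 \<and> N \<noteq> 0 \<and>
     (\<forall>j. enat (Suc j) \<le> N \<longrightarrow> a (Suc j) < a j) \<and>
     (\<forall>n. N = enat n \<longrightarrow> a n = 0) \<and>
     (N = \<infinity> \<longrightarrow> a \<longlonglongrightarrow> 0)"

definition sing_set :: "(nat \<Rightarrow> real) \<Rightarrow> enat \<Rightarrow> real set" where
  "sing_set a N = {a j | j. enat j \<le> N} \<union> {0}"

definition branch :: "(nat \<Rightarrow> real) \<Rightarrow> nat \<Rightarrow> real set" where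
  "branch a j = {a (Suc j)<..<a j}"

definition C3_on :: "(real \<Rightarrow> real) \<Rightarrow> real set \<Rightarrow> bool" where
  "C3_on f U \<longleftrightarrow>
     (\<forall>x\<in>U. \<forall>k<3. ((deriv ^^ k) f has_real_derivative (deriv ^^ Suc k) f x) (at x)) \<and>
     continuous_on U ((deriv ^^ 3) f)"

definition piecewise_expanding :: "(real \<Rightarrow> real) \<Rightarrow> (nat \<Rightarrow> real) \<Rightarrow> enat \<Rightarrow> bool" where
  "piecewise_expanding T a N \<longleftrightarrow>
     sing_points_ok a N \<and>
     (\<forall>x\<in>unit_I. T x \<in> unit_I) \<and>
     T ` unit_I = unit_I \<and>
     (\<forall>j. enat j < N \<longrightarrow> C3_on T (branch a j) \<and>
            (strict_mono_on (branch a j) T \<or> strict_mono_on (branch a j) (\<lambda>x. - T x))) \<and>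
     (\<exists>C>0. \<exists>lam>1. \<forall>n x. (\<forall>i<n. (T ^^ i) x \<in> unit_I - sing_set a N) \<longrightarrow>
            \<bar>deriv (T ^^ n) x\<bar> \<ge> C * lam ^ n) \<and>
     (\<forall>u v. u < v \<and> {u<..<v} \<subseteq> unit_I - sing_set a N \<longrightarrow>
            (\<exists>n\<ge>1. {0<..<1} \<subseteq> (T ^^ n) ` {u<..<v}))"

definition PE1 :: "(real \<Rightarrow> real) \<Rightarrow> (nat \<Rightarrow> real) \<Rightarrow> enat \<Rightarrow> bool" where
  "PE1 T a N \<longleftrightarrow> (\<exists>C>0. \<forall>j. enat j < N \<longrightarrow> (\<forall>x\<in>branch a j.
      \<bar>deriv (deriv T) x\<bar> / \<bar>deriv T x\<bar>^2 < C))"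

definition PE2 :: "(real \<Rightarrow> real) \<Rightarrow> (nat \<Rightarrow> real) \<Rightarrow> enat \<Rightarrow> bool" where
  "PE2 T a N \<longleftrightarrow> (\<exists>\<delta>>0. \<forall>j. enat j < N \<longrightarrow> measure lebesgue (T ` branch a j) > \<delta>)"

definition acip_ergodic :: "(real \<Rightarrow> real) \<Rightarrow> real measure \<Rightarrow> bool" where
  "acip_ergodic T \<mu> \<longleftrightarrow>
     prob_space \<mu> \<and> sets \<mu> = sets borel \<and> emeasure \<mu> unit_I = 1 \<and>
     absolutely_continuous lborel \<mu> \<and>
     T \<in> measurable \<mu> \<mu> \<and> distr \<mu> \<mu> T = \<mu> \<and>
     (\<forall>A\<in>sets borel. T -` A \<inter> unit_I = A \<inter> unit_I \<longrightarrow>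
          emeasure \<mu> A = 0 \<or> emeasure \<mu> A = 1)"

definition PE3 :: "(real \<Rightarrow> real) \<Rightarrow> real measure \<Rightarrow> bool" where
  "PE3 T \<mu> \<longleftrightarrow> integrable \<mu> (\<lambda>x. ln \<bar>deriv T x\<bar>)"

definition PE4 :: "real measure \<Rightarrow> real set \<Rightarrow> bool" where
  "PE4 \<mu> S \<longleftrightarrow> (\<exists>C>0. \<exists>\<gamma>>0. \<forall>\<epsilon>>0.
      measure \<mu> {x. infdist x S < \<epsilon>} < C * \<epsilon> powr \<gamma>)"

definition diophantine :: "(real \<Rightarrow> real) \<Rightarrow> real \<Rightarrow> bool" where
  "diophantine T x \<longleftrightarrow> (\<exists>\<epsilon>>0. \<exists>\<rho>0>0. \<forall>\<rho>. 0 < \<rho> \<and> \<rho> \<le> \<rho>0 \<longrightarrow>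
      (\<forall>k::nat. 0 < k \<and> real k \<le> \<epsilon> * \<bar>ln \<rho>\<bar> \<longrightarrow>
         {y\<in>unit_I. (T ^^ k) y \<in> ball x \<rho>} \<inter> ball x \<rho> = {}))"

end

theory Submission
  imports Defs
begin

(* Bounded distortion (PE1) on a branch whose image lies in [0,1] forces |T'(z)| <= K / d(z), where
   d(z) is the distance to the singular set.  So a small interval around an orbit is stretched by
   at most K / d(T^i x) at step i, i.e. by exp of a Birkhoff sum of -log d.  PE4 makes -log d
   integrable, and the maximal ergodic lemma bounds these Birkhoff sums by M m for almost every x.
   For such x the ball B(x, rho) follows the orbit of x for k <= eps |ln rho| steps and grows at most
   to rho^(3/4); hence a return of the ball to itself forces |T^k x - x| < 2 rho^(3/4).  Along such
   orbit segments T^k - id is expanding, so the points with |T^k x - x| < r lie in about exp(A k)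
   intervals of length 4r; summing over k and over rho = e^(-n) gives a convergent series, and
   Borel-Cantelli excludes these returns for almost every x.  The finitely many short return times
   are excluded because, by the same covering argument, almost no point is periodic. *)

section \<open>Derivative bounds from bounded distortion\<close>

lemma continuous_nonzero_obtains_sign:
  fixes g :: "real \<Rightarrow> real"
  assumes cont: "\<And>t. t \<in> {a..b} \<Longrightarrow> isCont g t" and nz: "\<And>t. t \<in> {a..b} \<Longrightarrow> g t \<noteq> 0"
  obtains \<sigma> :: real where "\<bar>\<sigma>\<bar> = 1" "\<And>t. t \<in> {a..b} \<Longrightarrow> \<sigma> * g t = \<bar>g t\<bar>"
proof -
  have "(\<forall>t\<in>{a..b}. 0 < g t) \<or> (\<forall>t\<in>{a..b}. g t < 0)"
  proof (rule ccontr)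
    assume "\<not> ?thesis"
    then obtain s t where st: "s \<in> {a..b}" "t \<in> {a..b}" "g s < 0" "0 < g t"
      using nz by (meson linorder_neqE_linordered_idom)
    have "\<exists>x\<in>{a..b}. g x = 0"
    proof (cases "s \<le> t")
      case True
      have "\<forall>x. s \<le> x \<and> x \<le> t \<longrightarrow> isCont g x" using st cont by auto
      then obtain x where "s \<le> x" "x \<le> t" "g x = 0" using IVT[of g s 0 t] True st by force
      then show ?thesis using st by auto
    next
      case False
      have "\<forall>x. t \<le> x \<and> x \<le> s \<longrightarrow> isCont g x" using st cont by auto
      then obtain x where "t \<le> x" "x \<le> s" "g x = 0" using IVT2[of g s 0 t] False st by force
      then show ?thesis using st by auto
    qed
    then show False using nz by blast
  qed
  then show thesis
  proof
    assume "\<forall>t\<in>{a..b}. 0 < g t"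
    then show thesis by (intro that[of 1]) (auto simp: abs_of_pos)
  next
    assume "\<forall>t\<in>{a..b}. g t < 0"
    then show thesis by (intro that[of "-1"]) (auto simp: abs_of_neg)
  qed
qed

lemma inverse_deriv_lipschitz_of_distortion:
  fixes f' f'' :: "real \<Rightarrow> real"
  assumes f'': "\<And>t. t \<in> {z..b} \<Longrightarrow> (f' has_real_derivative f'' t) (at t)"
    and nz: "\<And>t. t \<in> {z..b} \<Longrightarrow> f' t \<noteq> 0"
    and distortion: "\<And>t. t \<in> {z..b} \<Longrightarrow> \<bar>f'' t\<bar> \<le> C * (f' t)\<^sup>2"
    and t: "t \<in> {z..b}"
  shows "\<bar>inverse (f' t) - inverse (f' z)\<bar> \<le> C * (t - z)"
proof (cases "z = t")
  case False
  then have "z < t" using t by simp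
  have "\<exists>\<xi>. z < \<xi> \<and> \<xi> < t \<and>
      inverse (f' t) - inverse (f' z) = (t - z) * - (f'' \<xi> * inverse (f' \<xi> ^ Suc (Suc 0)))"
  proof (rule MVT2[OF \<open>z < t\<close>])
    fix s assume "z \<le> s" "s \<le> t"
    then have s: "s \<in> {z..b}" using t by auto
    show "((\<lambda>s. inverse (f' s)) has_real_derivative - (f'' s * inverse (f' s ^ Suc (Suc 0)))) (at s)"
      by (rule DERIV_inverse_fun[OF f''[OF s] nz[OF s]])
  qed
  then obtain \<xi> where \<xi>: "z < \<xi>" "\<xi> < t"
    and eq: "inverse (f' t) - inverse (f' z) = (t - z) * - (f'' \<xi> * inverse (f' \<xi> ^ 2))"
    by (auto simp: numeral_2_eq_2)
  have "\<xi> \<in> {z..b}" using \<xi> t by auto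
  then have "\<bar>f'' \<xi> * inverse (f' \<xi> ^ 2)\<bar> \<le> C"
    using distortion[of \<xi>] nz[of \<xi>]
    by (simp add: abs_mult power_abs divide_inverse[symmetric] pos_divide_le_eq)
  then show ?thesis using \<xi> by (simp add: eq abs_mult mult_left_mono)
qed simp

lemma abs_deriv_ge_of_distortion:
  fixes f' f'' :: "real \<Rightarrow> real"
  assumes f'': "\<And>t. t \<in> {z..b} \<Longrightarrow> (f' has_real_derivative f'' t) (at t)"
    and nz: "\<And>t. t \<in> {z..b} \<Longrightarrow> f' t \<noteq> 0"
    and distortion: "\<And>t. t \<in> {z..b} \<Longrightarrow> \<bar>f'' t\<bar> \<le> C * (f' t)\<^sup>2"
    and t: "t \<in> {z..b}" and "0 \<le> C"
  shows "\<bar>f' z\<bar> / (1 + C * (t - z) * \<bar>f' z\<bar>) \<le> \<bar>f' t\<bar>"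
proof -
  define p where "p = \<bar>f' z\<bar>"
  have p: "0 < p" using nz[of z] t by (simp add: p_def)
  have "\<bar>inverse (f' t)\<bar> \<le> 1 / p + C * (t - z)"
    using inverse_deriv_lipschitz_of_distortion[OF f'' nz distortion t]
      abs_triangle_ineq2[of "inverse (f' t)" "inverse (f' z)"]
    by (simp add: p_def abs_inverse divide_inverse)
  then have "inverse (1 / p + C * (t - z)) \<le> inverse \<bar>inverse (f' t)\<bar>"
    using nz[OF t] by (intro le_imp_inverse_le) auto
  also have "inverse \<bar>inverse (f' t)\<bar> = \<bar>f' t\<bar>"
    by (simp add: abs_inverse)
  finally have "inverse (1 / p + C * (t - z)) \<le> \<bar>f' t\<bar>" .
  moreover have "inverse (1 / p + C * (t - z)) = p / (1 + C * (t - z) * p)"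
    using p by (simp add: divide_simps)
  ultimately show ?thesis unfolding p_def[symmetric] by linarith
qed

lemma abs_deriv_le_of_distortion:
  fixes f f' f'' :: "real \<Rightarrow> real"
  assumes "0 < u" "0 < C"
    and f': "\<And>t. t \<in> {z..z+u} \<Longrightarrow> (f has_real_derivative f' t) (at t)"
    and f'': "\<And>t. t \<in> {z..z+u} \<Longrightarrow> (f' has_real_derivative f'' t) (at t)"
    and nz: "\<And>t. t \<in> {z..z+u} \<Longrightarrow> f' t \<noteq> 0"
    and distortion: "\<And>t. t \<in> {z..z+u} \<Longrightarrow> \<bar>f'' t\<bar> \<le> C * (f' t)\<^sup>2"
    and osc: "\<bar>f (z+u) - f z\<bar> \<le> D"
  shows "\<bar>f' z\<bar> \<le> (exp (C * D) - 1) / (C * u)"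
proof -
  define p where "p = \<bar>f' z\<bar>"
  have p: "0 < p" using nz[of z] \<open>0 < u\<close> by (simp add: p_def)
  obtain \<sigma> :: real where \<sigma>: "\<bar>\<sigma>\<bar> = 1" "\<And>t. t \<in> {z..z+u} \<Longrightarrow> \<sigma> * f' t = \<bar>f' t\<bar>"
    using continuous_nonzero_obtains_sign[of z "z + u" f'] f'' nz by (metis DERIV_isCont)
  \<comment> \<open>compare \<open>\<sigma> * f\<close> with a primitive of the lower bound for \<open>\<bar>f'\<bar>\<close>\<close>
  define \<phi> where "\<phi> t = \<sigma> * (f t - f z) - ln (1 + C * (t - z) * p) / C" for t
  have "\<phi> z \<le> \<phi> (z + u)"
  proof (rule DERIV_nonneg_imp_nondecreasing[of z "z + u" \<phi>])
    show "z \<le> z + u" using \<open>0 < u\<close> by simp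
    fix t assume "z \<le> t" "t \<le> z + u"
    then have t: "t \<in> {z..z+u}" by simp
    have pos: "0 < 1 + C * (t - z) * p" using t \<open>0 < C\<close> p by (simp add: add_pos_nonneg)
    have "(\<phi> has_real_derivative \<sigma> * f' t - C * p / (1 + C * (t - z) * p) / C) (at t)"
      unfolding \<phi>_def using pos by (auto intro!: derivative_eq_intros f'[OF t])
    moreover have "0 \<le> \<sigma> * f' t - C * p / (1 + C * (t - z) * p) / C"
      using abs_deriv_ge_of_distortion[OF f'' nz distortion t] \<sigma>(2)[OF t] \<open>0 < C\<close>
      by (simp add: p_def)
    ultimately show "\<exists>y. (\<phi> has_real_derivative y) (at t) \<and> 0 \<le> y" by blast
  qed
  moreover have "\<sigma> * (f (z + u) - f z) \<le> D"
    using osc \<sigma>(1) by (metis abs_ge_self abs_mult mult_1 order.trans)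
  moreover have "\<phi> z = 0" "\<phi> (z + u) = \<sigma> * (f (z + u) - f z) - ln (1 + C * u * p) / C"
    by (simp_all add: \<phi>_def)
  ultimately have "ln (1 + C * u * p) / C \<le> D" by linarith
  then have "ln (1 + C * u * p) \<le> C * D"
    using \<open>0 < C\<close> by (simp add: divide_le_eq mult.commute)
  then have "1 + C * u * p \<le> exp (C * D)"
    using \<open>0 < C\<close> \<open>0 < u\<close> p by (metis add_pos_pos exp_le_cancel_iff exp_ln mult_pos_pos zero_less_one)
  then show ?thesis using \<open>0 < C\<close> \<open>0 < u\<close> by (simp add: p_def field_simps)
qed

lemma expanding_imp_dist_le_displacement_diff:
  fixes f f' :: "real \<Rightarrow> real"
  assumes "u \<le> v"
    and f': "\<And>w. w \<in> {u..v} \<Longrightarrow> (f has_real_derivative f' w) (at w)"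
    and expanding: "\<And>w. w \<in> {u..v} \<Longrightarrow> 2 \<le> \<bar>f' w\<bar>"
  shows "v - u \<le> \<bar>(f v - v) - (f u - u)\<bar>"
proof (cases "u = v")
  case False
  then have "u < v" using \<open>u \<le> v\<close> by simp
  have "\<exists>\<xi>. u < \<xi> \<and> \<xi> < v \<and> (f v - v) - (f u - u) = (v - u) * (f' \<xi> - 1)"
  proof (rule MVT2[OF \<open>u < v\<close>])
    fix w assume "u \<le> w" "w \<le> v"
    then show "((\<lambda>w. f w - w) has_real_derivative f' w - 1) (at w)"
      using f'[of w] by (auto intro!: derivative_eq_intros)
  qed
  then obtain \<xi> where \<xi>: "u < \<xi>" "\<xi> < v" "(f v - v) - (f u - u) = (v - u) * (f' \<xi> - 1)"
    by blast
  have "1 \<le> \<bar>f' \<xi> - 1\<bar>" using expanding[of \<xi>] \<xi> by auto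
  then have "(v - u) * 1 \<le> (v - u) * \<bar>f' \<xi> - 1\<bar>"
    using \<open>u < v\<close> by (intro mult_left_mono) auto
  then show ?thesis using \<xi>(3) \<open>u < v\<close> by (simp add: abs_mult)
qed simp

section \<open>Outer measure, Borel-Cantelli and integrability\<close>

lemma outer_measure_of_UN_le:
  assumes "finite K" and space: "\<And>k. k \<in> K \<Longrightarrow> A k \<subseteq> space M"
  shows "outer_measure_of M (\<Union>k\<in>K. A k) \<le> (\<Sum>k\<in>K. outer_measure_of M (A k))"
proof -
  have "\<forall>k\<in>K. \<exists>E\<in>sets M. A k \<subseteq> E \<and> outer_measure_of M (A k) = emeasure M E"
    using outer_measure_of_attain[OF space] by blast
  then obtain E where E: "\<And>k. k \<in> K \<Longrightarrow> E k \<in> sets M"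
    "\<And>k. k \<in> K \<Longrightarrow> A k \<subseteq> E k" "\<And>k. k \<in> K \<Longrightarrow> outer_measure_of M (A k) = emeasure M (E k)"
    by metis
  have "outer_measure_of M (\<Union>k\<in>K. A k) \<le> outer_measure_of M (\<Union>k\<in>K. E k)"
    using E(2) by (intro outer_measure_of_mono) blast
  also have "\<dots> = emeasure M (\<Union>k\<in>K. E k)"
    using E(1) \<open>finite K\<close> by (intro outer_measure_of_eq) auto
  also have "\<dots> \<le> (\<Sum>k\<in>K. emeasure M (E k))"
    using E(1) \<open>finite K\<close> by (intro emeasure_subadditive_finite) auto
  also have "\<dots> = (\<Sum>k\<in>K. outer_measure_of M (A k))"
    using E(3) by simp
  finally show ?thesis .
qed

lemma outer_measure_of_le_if_locally_small:
  fixes A :: "real set"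
  assumes "A \<subseteq> {0..1}" "0 < h"
    and small: "\<And>u v. u \<in> A \<Longrightarrow> v \<in> A \<Longrightarrow> \<bar>u - v\<bar> \<le> h \<Longrightarrow> \<bar>u - v\<bar> < r"
  shows "outer_measure_of lborel A \<le> ennreal (2 * r * (1 / h + 2))"
proof (cases "A = {}")
  case True
  then show ?thesis by simp
next
  case False
  then obtain u where "u \<in> A" by blast
  then have "0 < r" using small[of u u] \<open>0 < h\<close> by simp
  define J where "J = nat \<lceil>1 / h\<rceil>"
  define cell where "cell j = {real j * h .. (real j + 1) * h}" for j :: nat
  have "A \<subseteq> (\<Union>j\<le>J. A \<inter> cell j)"
  proof
    fix x assume "x \<in> A"
    then have x: "0 \<le> x" "x \<le> 1" using assms(1) by auto
    define j where "j = nat \<lfloor>x / h\<rfloor>"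
    have "real j = of_int \<lfloor>x / h\<rfloor>" using x \<open>0 < h\<close> by (simp add: j_def)
    then have "real j \<le> x / h" "x / h < real j + 1" by linarith+
    then have "x \<in> cell j" using \<open>0 < h\<close> by (simp add: cell_def field_simps)
    moreover have "j \<le> J"
      using x \<open>0 < h\<close> unfolding j_def J_def
      by (intro nat_mono order.trans[OF floor_mono floor_le_ceiling]) (simp add: divide_right_mono)
    ultimately show "x \<in> (\<Union>j\<le>J. A \<inter> cell j)" using \<open>x \<in> A\<close> by blast
  qed
  then have "outer_measure_of lborel A \<le> outer_measure_of lborel (\<Union>j\<le>J. A \<inter> cell j)"
    by (rule outer_measure_of_mono)
  also have "\<dots> \<le> (\<Sum>j\<le>J. outer_measure_of lborel (A \<inter> cell j))"
    by (rule outer_measure_of_UN_le) auto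
  also have "\<dots> \<le> (\<Sum>j\<le>J. ennreal (2 * r))"
  proof (rule sum_mono)
    fix j
    show "outer_measure_of lborel (A \<inter> cell j) \<le> ennreal (2 * r)"
    proof (cases "A \<inter> cell j = {}")
      case False
      then obtain c where c: "c \<in> A" "c \<in> cell j" by blast
      have "A \<inter> cell j \<subseteq> ball c r"
      proof
        fix x assume "x \<in> A \<inter> cell j"
        then have "\<bar>x - c\<bar> \<le> h" using c by (auto simp: cell_def algebra_simps abs_le_iff)
        then show "x \<in> ball c r" using small[of x c] \<open>x \<in> A \<inter> cell j\<close> c
          by (auto simp: dist_real_def)
      qed
      then have "outer_measure_of lborel (A \<inter> cell j) \<le> outer_measure_of lborel (ball c r)"
        by (rule outer_measure_of_mono)
      also have "\<dots> = ennreal (2 * r)"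
        using \<open>0 < r\<close> by (simp add: ball_eq_greaterThanLessThan)
      finally show ?thesis .
    qed simp
  qed
  also have "\<dots> = ennreal ((real J + 1) * (2 * r))"
    using \<open>0 < r\<close> by (simp add: ennreal_mult ennreal_of_nat_eq_real_of_nat add.commute)
  also have "\<dots> \<le> ennreal (2 * r * (1 / h + 2))"
  proof (rule ennreal_leI)
    have "real J = of_int \<lceil>1 / h\<rceil>"
      using \<open>0 < h\<close> by (simp add: J_def)
    also have "\<dots> \<le> 1 / h + 1" by (rule of_int_ceiling_le_add_one)
    finally have "real J \<le> 1 / h + 1" .
    then show "(real J + 1) * (2 * r) \<le> 2 * r * (1 / h + 2)"
      using \<open>0 < r\<close> by (simp add: mult.commute mult_left_mono)
  qed
  finally show ?thesis .
qed

lemma AE_eventually_notin_of_summable_outer_measure: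
  assumes space: "\<And>n. A n \<subseteq> space M"
    and bound: "\<And>n. outer_measure_of M (A n) \<le> ennreal (c n)" and "\<And>n. 0 \<le> c n"
    and "summable c"
  shows "AE x in M. eventually (\<lambda>n. x \<notin> A n) sequentially"
proof -
  obtain E where E: "\<And>n. E n \<in> sets M" "\<And>n. A n \<subseteq> E n"
    "\<And>n. outer_measure_of M (A n) = emeasure M (E n)"
    using outer_measure_of_attain[OF space] by metis
  have E_le: "emeasure M (E n) \<le> ennreal (c n)" for n
    by (rule ord_eq_le_trans[OF E(3)[of n, symmetric] bound[of n]])
  have fin: "emeasure M (E n) < \<infinity>" for n
    using le_less_trans[OF E_le ennreal_less_top] by simp
  have le: "measure M (E n) \<le> c n" for n
    using E_le \<open>\<And>n. 0 \<le> c n\<close> by (simp add: measure_def enn2real_leI)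
  have "summable (\<lambda>n. measure M (E n))"
    by (rule summable_comparison_test'[OF \<open>summable c\<close>]) (use le in simp)
  from borel_cantelli_AE1[OF E(1) fin this]
  show ?thesis by eventually_elim (use E(2) in \<open>auto elim!: eventually_mono\<close>)
qed

lemma integrable_of_summable_measure_gt:
  fixes f :: "'a \<Rightarrow> real"
  assumes "finite_measure M" and f: "f \<in> borel_measurable M" and nonneg: "\<And>x. 0 \<le> f x"
    and summable: "summable (\<lambda>n. measure M {x \<in> space M. real n < f x})"
  shows "integrable M f"
proof -
  interpret finite_measure M by fact
  define L where "L n = {x \<in> space M. real n < f x}" for n :: nat
  have L: "L n \<in> sets M" for n using f by (simp add: L_def)
  \<comment> \<open>\<open>f x \<le> \<lceil>f x\<rceil>\<close>, and \<open>\<lceil>f x\<rceil>\<close> counts the level sets containing \<open>x\<close>\<close>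
  have pointwise: "ennreal (f x) \<le> (\<Sum>n. indicator (L n) x)" if "x \<in> space M" for x
  proof -
    define m where "m = nat \<lceil>f x\<rceil>"
    have "ennreal (f x) \<le> ennreal (real m)"
      using nonneg[of x] by (intro ennreal_leI) (simp add: m_def)
    also have "\<dots> = (\<Sum>n<m. indicator (L n) x)"
    proof -
      have "real n < f x" if "n < m" for n
        using that by (simp add: m_def less_ceiling_iff) linarith
      then show ?thesis using \<open>x \<in> space M\<close> by (simp add: L_def ennreal_of_nat_eq_real_of_nat)
    qed
    also have "\<dots> \<le> (\<Sum>n. indicator (L n) x)"
      by (rule sum_le_suminf) auto
    finally show ?thesis .
  qed
  have "(\<integral>\<^sup>+x. ennreal (norm (f x)) \<partial>M) \<le> (\<integral>\<^sup>+x. (\<Sum>n. indicator (L n) x) \<partial>M)"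
    using nonneg pointwise by (intro nn_integral_mono) simp
  also have "\<dots> = (\<Sum>n. emeasure M (L n))"
    using L by (simp add: nn_integral_suminf)
  also have "\<dots> = (\<Sum>n. ennreal (measure M (L n)))"
    by (simp add: emeasure_eq_measure)
  also have "\<dots> = ennreal (\<Sum>n. measure M (L n))"
    using summable by (intro suminf_ennreal2) (simp_all add: L_def)
  finally have "(\<integral>\<^sup>+x. ennreal (norm (f x)) \<partial>M) < \<infinity>"
    using le_less_trans[OF _ ennreal_less_top] by simp
  then show ?thesis using f by (intro integrableI_bounded) auto
qed

section \<open>Birkhoff sums and the maximal ergodic lemma\<close>

definition birkhoff_sum :: "('a \<Rightarrow> 'a) \<Rightarrow> ('a \<Rightarrow> real) \<Rightarrow> nat \<Rightarrow> 'a \<Rightarrow> real" where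
  "birkhoff_sum T g n x = (\<Sum>i<n. g ((T ^^ i) x))"

text \<open>\<open>max_birkhoff_sum T g n x\<close> is the maximum of \<open>0\<close> and the Birkhoff sums of length at most
  \<open>n\<close> at \<open>x\<close>, computed by the recursion that drives Garsia's proof of the maximal ergodic lemma.\<close>
primrec max_birkhoff_sum :: "('a \<Rightarrow> 'a) \<Rightarrow> ('a \<Rightarrow> real) \<Rightarrow> nat \<Rightarrow> 'a \<Rightarrow> real" where
  "max_birkhoff_sum T g 0 x = 0"
| "max_birkhoff_sum T g (Suc n) x = max 0 (g x + max_birkhoff_sum T g n (T x))"

lemma birkhoff_sum_Suc: "birkhoff_sum T g (Suc n) x = g x + birkhoff_sum T g n (T x)"
  unfolding birkhoff_sum_def
  by (subst sum.lessThan_Suc_shift) (simp add: funpow_Suc_right del: funpow.simps)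

lemma birkhoff_sum_diff_const: "birkhoff_sum T (\<lambda>x. g x - c) n x = birkhoff_sum T g n x - c * n"
  by (simp add: birkhoff_sum_def sum_subtractf)

lemma max_birkhoff_sum_nonneg: "0 \<le> max_birkhoff_sum T g n x"
  by (cases n) auto

lemma max_birkhoff_sum_le_Suc: "max_birkhoff_sum T g n x \<le> max_birkhoff_sum T g (Suc n) x"
proof (induction n arbitrary: x)
  case (Suc n)
  then show ?case by (metis add_left_mono max.mono order_refl max_birkhoff_sum.simps(2))
qed simp

lemma birkhoff_sum_le_max_birkhoff_sum:
  "m \<le> n \<Longrightarrow> birkhoff_sum T g m x \<le> max_birkhoff_sum T g n x"
proof (induction n arbitrary: m x)
  case 0
  then show ?case by (simp add: birkhoff_sum_def)
next
  case (Suc n)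
  show ?case
  proof (cases m)
    case 0
    then show ?thesis using max_birkhoff_sum_nonneg by (simp add: birkhoff_sum_def)
  next
    case (Suc m')
    then have "birkhoff_sum T g m' (T x) \<le> max_birkhoff_sum T g n (T x)"
      using Suc.IH Suc.prems by simp
    then show ?thesis using Suc by (simp add: birkhoff_sum_Suc)
  qed
qed

lemma max_birkhoff_sum_le_sum_abs: "max_birkhoff_sum T g n x \<le> (\<Sum>i<n. \<bar>g ((T ^^ i) x)\<bar>)"
proof (induction n arbitrary: x)
  case (Suc n)
  have "max_birkhoff_sum T g (Suc n) x \<le> \<bar>g x\<bar> + max_birkhoff_sum T g n (T x)"
    using max_birkhoff_sum_nonneg[of T g n "T x"] by auto
  also have "\<dots> \<le> \<bar>g x\<bar> + (\<Sum>i<n. \<bar>g ((T ^^ i) (T x))\<bar>)"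
    using Suc by simp
  also have "\<dots> = (\<Sum>i<Suc n. \<bar>g ((T ^^ i) x)\<bar>)"
    by (subst sum.lessThan_Suc_shift) (simp add: funpow_Suc_right del: funpow.simps)
  finally show ?case .
qed simp

lemma birkhoff_sum_mono:
  assumes "\<And>x. 0 \<le> g x" "m \<le> n"
  shows "birkhoff_sum T g m x \<le> birkhoff_sum T g n x"
  unfolding birkhoff_sum_def using assms by (intro sum_mono2) auto

lemma funpow_fixed_point: "f x = x \<Longrightarrow> (f ^^ n) x = x"
  by (induction n) auto

locale measure_preserving = finite_measure M for M :: "'a measure" +
  fixes T :: "'a \<Rightarrow> 'a"
  assumes measurable_T: "T \<in> measurable M M" and distr_T: "distr M M T = M"
begin

lemma measurable_funpow: "T ^^ n \<in> measurable M M"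
proof (induction n)
  case (Suc n)
  then show ?case using measurable_comp[OF Suc measurable_T] by (simp add: comp_def)
qed simp

lemma distr_funpow: "distr M M (T ^^ n) = M"
proof (induction n)
  case (Suc n)
  have "distr M M (T ^^ Suc n) = distr (distr M M (T ^^ n)) M T"
    using distr_distr[OF measurable_T measurable_funpow] by simp
  then show ?case using Suc distr_T by (simp add: comp_def)
qed simp

lemma integrable_comp_funpow:
  fixes g :: "'a \<Rightarrow> real"
  assumes "integrable M g" shows "integrable M (\<lambda>x. g ((T ^^ n) x))"
  using assms integrable_distr_eq[OF measurable_funpow, of g] by (simp add: distr_funpow)

lemma integral_comp_T:
  fixes g :: "'a \<Rightarrow> real"
  assumes "g \<in> borel_measurable M" shows "(\<integral>x. g (T x) \<partial>M) = (\<integral>x. g x \<partial>M)"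
  using integral_distr[OF measurable_T assms] by (simp add: distr_T)

lemma borel_measurable_max_birkhoff_sum:
  fixes g :: "'a \<Rightarrow> real"
  assumes "g \<in> borel_measurable M" shows "max_birkhoff_sum T g n \<in> borel_measurable M"
proof (induction n)
  case (Suc n)
  have "(\<lambda>x. max_birkhoff_sum T g n (T x)) \<in> borel_measurable M"
    using measurable_comp[OF measurable_T Suc] by (simp add: comp_def)
  then show ?case using assms by simp
qed simp

lemma integrable_max_birkhoff_sum:
  fixes g :: "'a \<Rightarrow> real"
  assumes "integrable M g" shows "integrable M (max_birkhoff_sum T g n)"
proof (rule Bochner_Integration.integrable_bound)
  show "integrable M (\<lambda>x. \<Sum>i<n. \<bar>g ((T ^^ i) x)\<bar>)"
    using integrable_comp_funpow[OF assms] by (intro Bochner_Integration.integrable_sum) auto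
  show "AE x in M. norm (max_birkhoff_sum T g n x) \<le> norm (\<Sum>i<n. \<bar>g ((T ^^ i) x)\<bar>)"
    by (intro AE_I2)
      (simp add: abs_of_nonneg[OF max_birkhoff_sum_nonneg] max_birkhoff_sum_le_sum_abs sum_nonneg)
qed (use assms borel_measurable_max_birkhoff_sum in simp)

text \<open>Garsia's proof: on the set where the running maximum \<open>G\<close> is positive, \<open>G = g + G' \<circ> T\<close>
  with \<open>G' \<le> G\<close>, and elsewhere \<open>G = 0 \<le> G \<circ> T\<close>; integrate \<open>G - G \<circ> T\<close>, whose integral vanishes.\<close>
lemma maximal_ergodic_lemma:
  assumes g: "integrable M g"
  shows "0 \<le> (\<integral>x. indicator {x \<in> space M. 0 < max_birkhoff_sum T g (Suc n) x} x * g x \<partial>M)"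
proof -
  define G where "G = max_birkhoff_sum T g (Suc n)"
  define E where "E = {x \<in> space M. 0 < G x}"
  have G: "integrable M G" unfolding G_def using integrable_max_birkhoff_sum[OF g] .
  then have E: "E \<in> sets M" unfolding E_def by measurable
  have GT: "integrable M (\<lambda>x. G (T x))"
    using integrable_comp_funpow[OF G, of 1] by simp
  have pointwise: "G x - G (T x) \<le> indicator E x * g x" if "x \<in> space M" for x
  proof (cases "x \<in> E")
    case True
    then show ?thesis
      using max_birkhoff_sum_le_Suc[of T g n "T x"] by (auto simp: E_def G_def)
  next
    case False
    then show ?thesis
      using that max_birkhoff_sum_nonneg[of T g "Suc n"] by (auto simp: E_def G_def not_less)
  qed
  have "0 = (\<integral>x. G x \<partial>M) - (\<integral>x. G (T x) \<partial>M)"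
    using integral_comp_T G by simp
  also have "\<dots> = (\<integral>x. G x - G (T x) \<partial>M)"
    using G GT by simp
  also have "\<dots> \<le> (\<integral>x. indicator E x * g x \<partial>M)"
    using G GT integrable_mult_indicator[OF E g] pointwise by (intro integral_mono) auto
  finally show ?thesis by (simp add: E_def G_def)
qed

lemma measure_max_birkhoff_sum_pos_le:
  assumes g: "integrable M g" "\<And>x. 0 \<le> g x" and "0 < t"
  shows "t * measure M {x \<in> space M. 0 < max_birkhoff_sum T (\<lambda>x. g x - t) (Suc n) x}
    \<le> (\<integral>x. g x \<partial>M)"
proof -
  define E where "E = {x \<in> space M. 0 < max_birkhoff_sum T (\<lambda>x. g x - t) (Suc n) x}"
  have gt: "integrable M (\<lambda>x. g x - t)" using g by simp
  then have E: "E \<in> sets M"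
    unfolding E_def using borel_measurable_max_birkhoff_sum by measurable
  have "0 \<le> (\<integral>x. indicator E x * (g x - t) \<partial>M)"
    using maximal_ergodic_lemma[OF gt] by (simp add: E_def)
  also have "\<dots> = (\<integral>x. indicator E x * g x \<partial>M) - t * measure M E"
    using integrable_mult_indicator[OF E g(1)] integrable_mult_indicator[OF E, of "\<lambda>_. t"] E
    by (simp add: right_diff_distrib mult.commute)
  also have "(\<integral>x. indicator E x * g x \<partial>M) \<le> (\<integral>x. g x \<partial>M)"
    using integrable_mult_indicator[OF E g(1)] g by (intro integral_mono) (auto simp: indicator_def)
  finally show ?thesis by (simp add: E_def)
qed

lemma measure_UN_max_birkhoff_sum_pos_le:
  assumes g: "integrable M g" "\<And>x. 0 \<le> g x" and "0 < t"
  shows "measure M (\<Union>n. {x \<in> space M. 0 < max_birkhoff_sum T (\<lambda>x. g x - t) (Suc n) x})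
    \<le> (\<integral>x. g x \<partial>M) / t"
proof -
  define E where "E n = {x \<in> space M. 0 < max_birkhoff_sum T (\<lambda>x. g x - t) (Suc n) x}" for n
  have E: "E n \<in> sets M" for n
    unfolding E_def using g borel_measurable_max_birkhoff_sum by measurable
  have "incseq E"
    using max_birkhoff_sum_le_Suc[of T "\<lambda>x. g x - t"]
    by (intro incseq_SucI) (auto simp: E_def simp del: max_birkhoff_sum.simps intro: less_le_trans)
  then have "(\<lambda>n. measure M (E n)) \<longlonglongrightarrow> measure M (\<Union>n. E n)"
    using E by (intro finite_Lim_measure_incseq) auto
  then have "measure M (\<Union>n. E n) \<le> (\<integral>x. g x \<partial>M) / t"
  proof (rule LIMSEQ_le_const2)
    show "\<exists>N. \<forall>n\<ge>N. measure M (E n) \<le> (\<integral>x. g x \<partial>M) / t"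
      using measure_max_birkhoff_sum_pos_le[OF g \<open>0 < t\<close>] \<open>0 < t\<close>
      by (simp add: E_def pos_le_divide_eq mult.commute del: max_birkhoff_sum.simps)
  qed
  then show ?thesis by (simp add: E_def)
qed

lemma AE_birkhoff_sum_le_linear:
  assumes g: "integrable M g" "\<And>x. 0 \<le> g x"
  shows "AE x in M. \<exists>K::nat. \<forall>m. birkhoff_sum T g m x \<le> real K * real m"
proof -
  define E where
    "E t n = {x \<in> space M. 0 < max_birkhoff_sum T (\<lambda>x. g x - t) (Suc n) x}" for t n
  have E: "E t n \<in> sets M" for t n
    unfolding E_def using g borel_measurable_max_birkhoff_sum by measurable
  define Z where "Z = (\<Inter>K. \<Union>n. E (real (Suc K)) n)"
  have Z: "Z \<in> sets M" unfolding Z_def using E by auto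
  have "measure M Z \<le> (\<integral>x. g x \<partial>M) / real (Suc K)" for K
  proof -
    have "measure M Z \<le> measure M (\<Union>n. E (real (Suc K)) n)"
      using E by (intro finite_measure_mono) (auto simp: Z_def)
    then show ?thesis
      using measure_UN_max_birkhoff_sum_pos_le[OF g, of "real (Suc K)"] by (simp add: E_def)
  qed
  moreover have "(\<lambda>K. (\<integral>x. g x \<partial>M) / real (Suc K)) \<longlonglongrightarrow> 0"
    using LIMSEQ_Suc[OF lim_const_over_n] by simp
  ultimately have "measure M Z \<le> 0"
    by (intro LIMSEQ_le_const[where X = "\<lambda>K. (\<integral>x. g x \<partial>M) / real (Suc K)"]) auto
  then have "Z \<in> null_sets M"
    using Z measure_nonneg[of M Z] by (simp add: emeasure_eq_measure null_sets_def)
  then show ?thesis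
  proof (rule AE_I')
    show "{x \<in> space M. \<not> (\<exists>K::nat. \<forall>m. birkhoff_sum T g m x \<le> real K * real m)} \<subseteq> Z"
    proof (safe, unfold Z_def, intro InterI, safe)
      fix x K
      assume x: "x \<in> space M" and unbounded: "\<nexists>K::nat. \<forall>m. birkhoff_sum T g m x \<le> real K * real m"
      then have "\<not> (\<forall>m. birkhoff_sum T g m x \<le> real (Suc K) * real m)" by blast
      then obtain m where m: "real (Suc K) * real m < birkhoff_sum T g m x"
        by (auto simp: not_le)
      then have "m \<noteq> 0" by (cases "m = 0") (auto simp: birkhoff_sum_def)
      then obtain n where "m = Suc n" using not0_implies_Suc by blast
      then have "x \<in> E (real (Suc K)) n"
        using x m birkhoff_sum_le_max_birkhoff_sum[of m "Suc n" T "\<lambda>x. g x - real (Suc K)" x]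
        by (simp add: E_def birkhoff_sum_diff_const)
      then show "x \<in> (\<Union>n. E (real (Suc K)) n)" by blast
    qed
  qed
qed

end

section \<open>Piecewise expanding maps of the interval\<close>

locale piecewise_expanding_map =
  fixes T :: "real \<Rightarrow> real" and a :: "nat \<Rightarrow> real" and N :: enat and C0 lam C1 :: real
  assumes sing_points: "sing_points_ok a N"
    and maps_into: "\<And>x. x \<in> {0..1} \<Longrightarrow> T x \<in> {0..1}"
    and C3: "\<And>j. enat j < N \<Longrightarrow> C3_on T (branch a j)"
    and C0: "0 < C0" and lam: "1 < lam"
    and expanding: "\<And>n x. \<forall>i<n. (T ^^ i) x \<in> {0..1} - sing_set a N \<Longrightarrow>
      C0 * lam ^ n \<le> \<bar>deriv (T ^^ n) x\<bar>"
    and C1: "0 < C1"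
    and distortion: "\<And>j x. enat j < N \<Longrightarrow> x \<in> branch a j \<Longrightarrow>
      \<bar>deriv (deriv T) x\<bar> / \<bar>deriv T x\<bar>\<^sup>2 < C1"
begin

abbreviation "S \<equiv> sing_set a N"

lemma a_0: "a 0 = 1"
  using sing_points by (simp add: sing_points_ok_def)

lemma a_in_sing_set: "enat j \<le> N \<Longrightarrow> a j \<in> S"
  by (auto simp: sing_set_def)

lemma zero_in_sing_set: "0 \<in> S"
  by (auto simp: sing_set_def)

lemma countable_sing_set: "countable S"
proof -
  have "S \<subseteq> insert 0 (range a)" by (auto simp: sing_set_def)
  then show ?thesis by (rule countable_subset) simp
qed

lemma closed_sing_set: "closed S"
proof (cases N)
  case (enat n)
  then have "S \<subseteq> insert 0 (a ` {..n})" by (auto simp: sing_set_def)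
  then show ?thesis by (meson finite_atMost finite_imageI finite_insert finite_subset finite_imp_closed)
next
  case infinity
  then have "S = insert 0 (range a)" by (auto simp: sing_set_def)
  moreover have "a \<longlonglongrightarrow> 0" using infinity sing_points by (simp add: sing_points_ok_def)
  ultimately show ?thesis by (simp add: compact_imp_closed compact_sequence_with_limit)
qed

lemma infdist_sing_set_pos: "z \<notin> S \<Longrightarrow> 0 < infdist z S"
  using closed_sing_set zero_in_sing_set in_closed_iff_infdist_zero[of S z] infdist_nonneg[of z S]
  by force

lemma not_in_sing_set_if_close: "\<bar>w - z\<bar> < infdist z S \<Longrightarrow> w \<notin> S"
  using infdist_triangle[of z S w] in_closed_iff_infdist_zero[OF closed_sing_set] zero_in_sing_set
  by (force simp: dist_real_def abs_minus_commute)

lemma a_strict_decreasing: "enat j \<le> N \<Longrightarrow> i < j \<Longrightarrow> a j < a i"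
proof (induction j)
  case (Suc j)
  have "a (Suc j) < a j" using sing_points Suc.prems by (simp add: sing_points_ok_def)
  moreover have "enat j \<le> N" using Suc.prems(1) by (meson Suc_ile_eq order_less_imp_le)
  ultimately show ?case using Suc by (cases "i = j") auto
qed simp

lemma a_nonneg: "enat i \<le> N \<Longrightarrow> 0 \<le> a i"
proof (cases N)
  case (enat n)
  assume i: "enat i \<le> N"
  have "a n = 0" using sing_points enat by (simp add: sing_points_ok_def)
  then show ?thesis using a_strict_decreasing[of n i] i enat by (cases "i = n") auto
next
  case infinity
  then have lim: "a \<longlonglongrightarrow> 0" using sing_points by (simp add: sing_points_ok_def)
  show ?thesis
  proof (rule ccontr)
    assume "\<not> 0 \<le> a i"
    then have "\<forall>\<^sub>F j in sequentially. a i < a j" using lim by (simp add: order_tendstoD(1))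
    then obtain j where "i < j" "a i < a j"
      by (metis eventually_sequentially le_add2 less_add_Suc1 order.strict_trans2 add.commute)
    moreover have "a j < a i" using a_strict_decreasing[of j i] infinity \<open>i < j\<close> by simp
    ultimately show False by simp
  qed
qed

lemma branch_subset: "enat j < N \<Longrightarrow> branch a j \<subseteq> {0..1} - S"
proof
  fix x assume j: "enat j < N" and "x \<in> branch a j"
  then have x: "a (Suc j) < x" "x < a j" by (auto simp: branch_def)
  have jN: "enat j \<le> N" "enat (Suc j) \<le> N" using j by (auto simp: Suc_ile_eq)
  have "x \<in> {0..1}"
    using x a_nonneg[OF jN(2)] a_strict_decreasing[OF jN(1), of 0] a_0 by (cases j) auto
  moreover have "x \<noteq> a i" if "enat i \<le> N" for i
  proof (cases "i \<le> j")
    case True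
    then have "a j \<le> a i" using a_strict_decreasing[OF jN(1), of i] by (cases "i = j") auto
    then show ?thesis using x by simp
  next
    case False
    then have "a i \<le> a (Suc j)" using a_strict_decreasing[OF that, of "Suc j"] by (cases "i = Suc j") auto
    then show ?thesis using x by simp
  qed
  moreover have "x \<noteq> 0" using x a_nonneg[OF jN(2)] by simp
  ultimately show "x \<in> {0..1} - S" by (auto simp: sing_set_def)
qed

lemma in_branch_if_nonsingular:
  assumes z: "z \<in> {0..1}" "z \<notin> S"
  obtains j where "enat j < N" "z \<in> branch a j"
proof -
  have "0 < z" using z zero_in_sing_set by (cases "z = 0") auto
  have "\<exists>i. a i < z \<and> enat i \<le> N"
  proof (cases N)
    case (enat n)
    then show ?thesis using sing_points \<open>0 < z\<close> by (intro exI[of _ n]) (auto simp: sing_points_ok_def)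
  next
    case infinity
    then have "a \<longlonglongrightarrow> 0" using sing_points by (simp add: sing_points_ok_def)
    then have "\<forall>\<^sub>F i in sequentially. a i < z" using \<open>0 < z\<close> by (simp add: order_tendstoD(2))
    then show ?thesis using infinity by (auto simp: eventually_sequentially)
  qed
  define i0 where "i0 = (LEAST i. a i < z \<and> enat i \<le> N)"
  have i0: "a i0 < z" "enat i0 \<le> N"
    using LeastI_ex[OF \<open>\<exists>i. a i < z \<and> enat i \<le> N\<close>] by (auto simp: i0_def)
  then obtain j where j: "i0 = Suc j" using a_0 z by (cases i0) auto
  have jN: "enat j < N" using i0(2) j by (simp add: Suc_ile_eq)
  have "\<not> (a j < z \<and> enat j \<le> N)"
    using not_less_Least[of j "\<lambda>i. a i < z \<and> enat i \<le> N"] j by (simp add: i0_def)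
  moreover have "a j \<noteq> z" using z a_in_sing_set[of j] jN by auto
  ultimately show thesis using that[OF jN] jN i0 j by (auto simp: branch_def)
qed

lemma T_has_derivatives:
  assumes "enat j < N" "x \<in> branch a j"
  shows "(T has_real_derivative deriv T x) (at x)"
    and "(deriv T has_real_derivative deriv (deriv T) x) (at x)"
proof -
  have D: "((deriv ^^ k) T has_real_derivative (deriv ^^ Suc k) T x) (at x)" if "k < 3" for k
    using C3[OF assms(1)] assms(2) that by (simp add: C3_on_def)
  show "(T has_real_derivative deriv T x) (at x)" using D[of 0] by simp
  show "(deriv T has_real_derivative deriv (deriv T) x) (at x)" using D[of 1] by simp
qed

lemma T_has_real_derivative: "z \<in> {0..1} - S \<Longrightarrow> (T has_real_derivative deriv T z) (at z)"
  by (metis Diff_iff T_has_derivatives(1) in_branch_if_nonsingular)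

lemma deriv_T_nonzero:
  assumes "x \<in> {0..1} - S" shows "deriv T x \<noteq> 0"
proof -
  have "0 < C0 * lam" using C0 lam by simp
  also have "C0 * lam \<le> \<bar>deriv T x\<bar>" using expanding[of 1 x] assms by simp
  finally show ?thesis by simp
qed

lemma orbit_in_unit: "x \<in> {0..1} \<Longrightarrow> (T ^^ n) x \<in> {0..1}"
  by (induction n) (use maps_into in auto)

text \<open>By \<open>abs_deriv_le_of_distortion\<close> on half the gap to the end of the branch,
  \<open>\<bar>T'\<bar> \<le> (4 * (exp C1 - 1) / C1) / (2 * infdist z S)\<close>; the maximum with \<open>1\<close> is for convenience.\<close>
definition lip_const :: real where
  "lip_const = max 1 (4 * (exp C1 - 1) / C1)"

lemma lip_const_ge_1: "1 \<le> lip_const"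
  by (simp add: lip_const_def)

lemma abs_deriv_T_le:
  assumes z: "z \<in> {0..1} - S"
  shows "\<bar>deriv T z\<bar> \<le> lip_const / (2 * infdist z S)"
proof -
  obtain j where j: "enat j < N" "z \<in> branch a j"
    using in_branch_if_nonsingular z by blast
  define L where "L = a j - z"
  have d: "0 < infdist z S" using z infdist_sing_set_pos by auto
  have dL: "infdist z S \<le> L"
    using a_in_sing_set[of j] j infdist_le[of "a j" S z] by (auto simp: L_def dist_real_def branch_def)
  have sub: "t \<in> branch a j" if "t \<in> {z..z + L / 2}" for t
    using that j(2) by (auto simp: branch_def L_def field_simps)
  have "z + L / 2 \<in> branch a j" using sub d dL by simp
  then have "z + L / 2 \<in> {0..1}" using branch_subset[OF j(1)] by blast
  then have osc: "\<bar>T (z + L / 2) - T z\<bar> \<le> 1"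
    using maps_into[of z] maps_into[of "z + L / 2"] z by (auto simp: abs_le_iff)
  have "\<bar>deriv T z\<bar> \<le> (exp (C1 * 1) - 1) / (C1 * (L / 2))"
  proof (rule abs_deriv_le_of_distortion[where f = T and f' = "deriv T" and f'' = "deriv (deriv T)"
        and z = z])
    show "0 < L / 2" using j(2) by (simp add: L_def branch_def)
    show "0 < C1" by (rule C1)
    show "\<bar>T (z + L / 2) - T z\<bar> \<le> 1" by (rule osc)
    fix t assume t: "t \<in> {z..z + L / 2}"
    show "(T has_real_derivative deriv T t) (at t)"
      and "(deriv T has_real_derivative deriv (deriv T) t) (at t)"
      using T_has_derivatives[OF j(1) sub[OF t]] by auto
    show nz: "deriv T t \<noteq> 0"
      using deriv_T_nonzero branch_subset[OF j(1)] sub[OF t] by blast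
    have "\<bar>deriv (deriv T) t\<bar> / (deriv T t)\<^sup>2 < C1"
      using distortion[OF j(1) sub[OF t]] by simp
    then show "\<bar>deriv (deriv T) t\<bar> \<le> C1 * (deriv T t)\<^sup>2"
      using nz by (simp add: pos_divide_less_eq)
  qed
  also have "\<dots> = (4 * (exp C1 - 1) / C1) / (2 * L)"
    using C1 d dL by (simp add: field_simps)
  also have "\<dots> \<le> lip_const / (2 * L)"
    using d dL by (intro divide_right_mono) (auto simp: lip_const_def)
  also have "\<dots> \<le> lip_const / (2 * infdist z S)"
    using lip_const_ge_1 d dL by (intro divide_left_mono) auto
  finally show ?thesis .
qed

lemma T_lipschitz_near:
  assumes z: "z \<in> {0..1} - S"
    and u: "u \<in> {0..1}" "\<bar>u - z\<bar> < infdist z S / 2"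
    and v: "v \<in> {0..1}" "\<bar>v - z\<bar> < infdist z S / 2"
  shows "\<bar>T u - T v\<bar> \<le> lip_const / infdist z S * \<bar>u - v\<bar>"
proof -
  define d where "d = infdist z S"
  have "0 < d" using z infdist_sing_set_pos by (auto simp: d_def)
  define U where "U = {0..1} \<inter> ball z (d / 2)"
  have near: "w \<in> {0..1} - S" "d / 2 \<le> infdist w S" if "w \<in> U" for w
  proof -
    have "\<bar>w - z\<bar> < d / 2" using that by (auto simp: U_def dist_real_def abs_minus_commute)
    then show "d / 2 \<le> infdist w S"
      using infdist_triangle[of z S w] by (simp add: d_def dist_real_def abs_minus_commute)
    then have "w \<notin> S" using \<open>0 < d\<close> infdist_zero[of w S] by auto
    then show "w \<in> {0..1} - S" using that by (simp add: U_def)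
  qed
  have "norm (T u - T v) \<le> lip_const / d * norm (u - v)"
  proof (rule field_differentiable_bound[of U])
    show "convex U" by (simp add: U_def convex_Int)
    show "u \<in> U" "v \<in> U" using u v by (auto simp: U_def d_def dist_real_def abs_minus_commute)
    fix w assume "w \<in> U"
    show "(T has_field_derivative deriv T w) (at w within U)"
      using T_has_real_derivative[OF near(1)[OF \<open>w \<in> U\<close>]] by (rule has_field_derivative_at_within)
    have "\<bar>deriv T w\<bar> \<le> lip_const / (2 * infdist w S)"
      by (rule abs_deriv_T_le[OF near(1)[OF \<open>w \<in> U\<close>]])
    also have "\<dots> \<le> lip_const / d"
      using near(2)[OF \<open>w \<in> U\<close>] \<open>0 < d\<close> lip_const_ge_1 by (intro divide_left_mono) auto
    finally show "norm (deriv T w) \<le> lip_const / d" by simp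
  qed
  then show ?thesis by (simp add: d_def)
qed

definition neg_log_infdist :: "real \<Rightarrow> real" where
  "neg_log_infdist z = max 0 (- ln (infdist z S))"

lemma neg_log_infdist_nonneg: "0 \<le> neg_log_infdist z"
  by (simp add: neg_log_infdist_def)

lemma inverse_infdist_le_exp:
  assumes "z \<notin> S" shows "1 / infdist z S \<le> exp (neg_log_infdist z)"
proof -
  have "1 / infdist z S = exp (- ln (infdist z S))"
    using infdist_sing_set_pos[OF assms] by (simp add: exp_minus inverse_eq_divide)
  also have "\<dots> \<le> exp (neg_log_infdist z)" by (simp add: neg_log_infdist_def)
  finally show ?thesis .
qed

text \<open>\<open>shadow_radius r l x\<close> bounds the distance after \<open>l\<close> steps between the orbit of \<open>x\<close> and that
  of a point \<open>r\<close>-close to \<open>x\<close>: each step multiplies distances by at most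
  \<open>lip_const / infdist \<le> lip_const * exp neg_log_infdist\<close>.\<close>
definition shadow_radius :: "real \<Rightarrow> nat \<Rightarrow> real \<Rightarrow> real" where
  "shadow_radius r l x = r * lip_const ^ l * exp (birkhoff_sum T neg_log_infdist l x)"

lemma shadow_radius_Suc:
  "shadow_radius r (Suc l) x = lip_const * exp (neg_log_infdist ((T ^^ l) x)) * shadow_radius r l x"
  by (simp add: shadow_radius_def birkhoff_sum_def exp_add)

lemma shadow_radius_mono: "0 \<le> r \<Longrightarrow> l \<le> k \<Longrightarrow> shadow_radius r l x \<le> shadow_radius r k x"
  unfolding shadow_radius_def using lip_const_ge_1 neg_log_infdist_nonneg
  by (intro mult_mono power_increasing birkhoff_sum_mono exp_mono) auto

lemma shadow_radius_lt_half_infdist: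
  assumes z: "(T ^^ l) x \<notin> S" and "0 \<le> r" and small: "shadow_radius r (Suc l) x < 1 / 2"
  shows "shadow_radius r l x < infdist ((T ^^ l) x) S / 2"
proof -
  define f where "f = exp (neg_log_infdist ((T ^^ l) x))"
  have "0 \<le> f * shadow_radius r l x"
    using lip_const_ge_1 \<open>0 \<le> r\<close> by (simp add: f_def shadow_radius_def)
  then have "f * shadow_radius r l x \<le> lip_const * (f * shadow_radius r l x)"
    using mult_right_mono[OF lip_const_ge_1] by fastforce
  also have "\<dots> < 1 / 2" using small by (simp add: shadow_radius_Suc f_def)
  finally have "shadow_radius r l x < 1 / (2 * f)" by (simp add: f_def field_simps)
  also have "\<dots> \<le> infdist ((T ^^ l) x) S / 2"
    using inverse_infdist_le_exp[OF z] infdist_sing_set_pos[OF z] by (simp add: f_def field_simps)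
  finally show ?thesis .
qed

lemma orbit_shadowing:
  assumes x: "x \<in> {0..1}" "\<forall>i<k. (T ^^ i) x \<notin> S" and w: "w \<in> {0..1}" "\<bar>w - x\<bar> \<le> r"
    and small: "shadow_radius r k x < 1 / 2"
  shows "l \<le> k \<Longrightarrow> \<bar>(T ^^ l) w - (T ^^ l) x\<bar> \<le> shadow_radius r l x"
    and "l < k \<Longrightarrow> (T ^^ l) w \<notin> S"
proof -
  have "0 \<le> r" using w by linarith
  have close: "shadow_radius r l x < infdist ((T ^^ l) x) S / 2" if "l < k" for l
    using x that \<open>0 \<le> r\<close> le_less_trans[OF shadow_radius_mono[of r "Suc l" k] small]
    by (intro shadow_radius_lt_half_infdist) auto
  have bound: "\<bar>(T ^^ l) w - (T ^^ l) x\<bar> \<le> shadow_radius r l x" if "l \<le> k" for l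
    using that
  proof (induction l)
    case 0
    then show ?case using w by (simp add: shadow_radius_def birkhoff_sum_def)
  next
    case (Suc l)
    define z where "z = (T ^^ l) x"
    have "l < k" using Suc.prems by simp
    have z: "z \<in> {0..1} - S" using x orbit_in_unit \<open>l < k\<close> by (simp add: z_def)
    have IH: "\<bar>(T ^^ l) w - z\<bar> \<le> shadow_radius r l x" using Suc by (simp add: z_def)
    have w_close: "\<bar>(T ^^ l) w - z\<bar> < infdist z S / 2"
      using IH close[OF \<open>l < k\<close>] by (simp add: z_def)
    have z_close: "\<bar>z - z\<bar> < infdist z S / 2"
      using z infdist_sing_set_pos[of z] by simp
    have "\<bar>T ((T ^^ l) w) - T z\<bar> \<le> lip_const / infdist z S * \<bar>(T ^^ l) w - z\<bar>"
      by (rule T_lipschitz_near[OF z orbit_in_unit[OF w(1)] w_close _ z_close]) (use z in simp)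
    also have "\<dots> \<le> lip_const * exp (neg_log_infdist z) * shadow_radius r l x"
    proof (rule mult_mono[OF _ IH])
      have "lip_const * (1 / infdist z S) \<le> lip_const * exp (neg_log_infdist z)"
        using inverse_infdist_le_exp[of z] z lip_const_ge_1 by (intro mult_left_mono) auto
      then show "lip_const / infdist z S \<le> lip_const * exp (neg_log_infdist z)" by simp
    qed (use lip_const_ge_1 in auto)
    also have "\<dots> = shadow_radius r (Suc l) x" by (simp add: shadow_radius_Suc z_def)
    finally show ?case by (simp add: z_def)
  qed
  show "l \<le> k \<Longrightarrow> \<bar>(T ^^ l) w - (T ^^ l) x\<bar> \<le> shadow_radius r l x"
    by (rule bound)
  show "l < k \<Longrightarrow> (T ^^ l) w \<notin> S"
    using bound[of l] close[of l] infdist_sing_set_pos[of "(T ^^ l) x"] x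
    by (intro not_in_sing_set_if_close[where z = "(T ^^ l) x"]) auto
qed

definition tame :: "real \<Rightarrow> real set" where
  "tame M = {x \<in> {0..1}. (\<forall>l. (T ^^ l) x \<notin> S) \<and>
     (\<forall>m. birkhoff_sum T neg_log_infdist m x \<le> M * real m)}"

definition growth_rate :: "real \<Rightarrow> real" where
  "growth_rate M = ln lip_const + M"

lemma growth_rate_nonneg: "0 \<le> M \<Longrightarrow> 0 \<le> growth_rate M"
  using lip_const_ge_1 by (simp add: growth_rate_def)

lemma tame_shadowing:
  assumes x: "x \<in> tame M" and w: "w \<in> {0..1}" "\<bar>w - x\<bar> \<le> r"
    and small: "r * exp (growth_rate M * k) < 1 / 2"
  shows "\<bar>(T ^^ k) w - (T ^^ k) x\<bar> \<le> r * exp (growth_rate M * k)"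
    and "\<forall>l<k. (T ^^ l) w \<in> {0..1} - S"
proof -
  have "0 \<le> r" using w(2) by linarith
  have x_orbit: "x \<in> {0..1}" "\<forall>i<k. (T ^^ i) x \<notin> S" using x by (auto simp: tame_def)
  have "lip_const ^ k = exp (ln lip_const * k)"
    using lip_const_ge_1 by (simp add: exp_of_nat_mult mult.commute)
  moreover have "birkhoff_sum T neg_log_infdist k x \<le> M * k" using x by (simp add: tame_def)
  ultimately have "lip_const ^ k * exp (birkhoff_sum T neg_log_infdist k x) \<le> exp (growth_rate M * k)"
    by (simp add: growth_rate_def distrib_right mult_exp_exp)
  then have le: "shadow_radius r k x \<le> r * exp (growth_rate M * k)"
    using \<open>0 \<le> r\<close> by (simp add: shadow_radius_def mult.assoc mult_left_mono)
  note shadow = orbit_shadowing[OF x_orbit w le_less_trans[OF le small]]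
  show "\<bar>(T ^^ k) w - (T ^^ k) x\<bar> \<le> r * exp (growth_rate M * k)"
    using shadow(1)[of k] le by simp
  show "\<forall>l<k. (T ^^ l) w \<in> {0..1} - S"
    using shadow(2) orbit_in_unit[OF w(1)] by blast
qed

lemma funpow_has_real_derivative:
  assumes "\<forall>i<n. (T ^^ i) w \<in> {0..1} - S"
  shows "((T ^^ n) has_real_derivative deriv (T ^^ n) w) (at w)"
proof -
  have "\<exists>D. ((T ^^ n) has_real_derivative D) (at w)"
    using assms
  proof (induction n)
    case 0
    show ?case by (auto intro: DERIV_ident simp: id_def)
  next
    case (Suc n)
    then obtain D where "((T ^^ n) has_real_derivative D) (at w)" by auto
    from DERIV_chain[OF T_has_real_derivative this] Suc.prems show ?case
      by (metis funpow.simps(2) lessI)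
  qed
  then show ?thesis using DERIV_imp_deriv by blast
qed

definition near_return :: "real \<Rightarrow> nat \<Rightarrow> real \<Rightarrow> real set" where
  "near_return M k r = {x \<in> tame M. \<bar>(T ^^ k) x - x\<bar> < r}"

text \<open>Between two such points \<open>T ^^ k\<close> is defined and expands by a factor \<open>\<ge> 2\<close>, so the
  displacement \<open>T ^^ k - id\<close> separates them.\<close>
lemma near_return_locally_small:
  assumes k: "2 \<le> C0 * lam ^ k"
    and u: "u \<in> near_return M k r" and v: "v \<in> near_return M k r"
    and uv: "u \<le> v" "v - u \<le> 1 / (4 * exp (growth_rate M * k))"
  shows "v - u < 2 * r"
proof -
  have uI: "u \<in> tame M" "u \<in> {0..1}" and vI: "v \<in> {0..1}"
    using u v by (auto simp: near_return_def tame_def)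
  have orbit: "\<forall>l<k. (T ^^ l) w \<in> {0..1} - S" if "w \<in> {u..v}" for w
  proof (rule tame_shadowing(2)[OF uI(1)])
    show "w \<in> {0..1}" using that uI vI by auto
    show "\<bar>w - u\<bar> \<le> 1 / (4 * exp (growth_rate M * k))" using that uv by auto
    show "1 / (4 * exp (growth_rate M * k)) * exp (growth_rate M * k) < 1 / 2"
      by simp
  qed
  have "v - u \<le> \<bar>((T ^^ k) v - v) - ((T ^^ k) u - u)\<bar>"
  proof (rule expanding_imp_dist_le_displacement_diff[OF uv(1)])
    fix w assume "w \<in> {u..v}"
    show "((T ^^ k) has_real_derivative deriv (T ^^ k) w) (at w)"
      using funpow_has_real_derivative orbit[OF \<open>w \<in> {u..v}\<close>] .
    show "2 \<le> \<bar>deriv (T ^^ k) w\<bar>"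
      using expanding orbit[OF \<open>w \<in> {u..v}\<close>] k order.trans by blast
  qed
  also have "\<dots> < 2 * r" using u v by (auto simp: near_return_def)
  finally show ?thesis .
qed

lemma outer_measure_near_return:
  assumes "2 \<le> C0 * lam ^ k" "0 \<le> M" "0 \<le> r"
  shows "outer_measure_of lborel (near_return M k r) \<le> ennreal (24 * r * exp (growth_rate M * k))"
proof -
  define h where "h = 1 / (4 * exp (growth_rate M * k))"
  have "outer_measure_of lborel (near_return M k r) \<le> ennreal (2 * (2 * r) * (1 / h + 2))"
  proof (rule outer_measure_of_le_if_locally_small)
    show "near_return M k r \<subseteq> {0..1}" by (auto simp: near_return_def tame_def)
    show "0 < h" by (simp add: h_def)
    fix u v assume "u \<in> near_return M k r" "v \<in> near_return M k r" "\<bar>u - v\<bar> \<le> h"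
    then show "\<bar>u - v\<bar> < 2 * r"
      using near_return_locally_small[OF assms(1)] by (cases "u \<le> v") (auto simp: h_def)
  qed
  also have "\<dots> \<le> ennreal (24 * r * exp (growth_rate M * k))"
  proof (rule ennreal_leI)
    define E where "E = exp (growth_rate M * k)"
    have "1 \<le> E" using growth_rate_nonneg[OF assms(2)] by (simp add: E_def)
    then have "r * 1 \<le> r * E" using assms(3) by (intro mult_left_mono)
    have "1 / h = 4 * E" by (simp add: h_def E_def)
    then have "2 * (2 * r) * (1 / h + 2) = 16 * (r * E) + 8 * r" by (simp add: algebra_simps)
    also have "\<dots> \<le> 24 * (r * E)" using \<open>r * 1 \<le> r * E\<close> by linarith
    also have "\<dots> = 24 * r * exp (growth_rate M * k)" by (simp add: E_def)
    finally show "2 * (2 * r) * (1 / h + 2) \<le> 24 * r * exp (growth_rate M * k)" .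
  qed
  finally show ?thesis .
qed

text \<open>\<open>return_exponent M\<close> is the \<open>\<epsilon>\<close> of the Diophantine property: it is chosen so that
  \<open>growth_rate M * k \<le> L / 4\<close> whenever \<open>k \<le> \<epsilon> L\<close>, and then a return to \<open>ball x (exp (- L))\<close> after \<open>k\<close>
  steps moves \<open>x\<close> by less than \<open>2 * exp (- 3 / 4 * L)\<close>.\<close>
definition return_exponent :: "real \<Rightarrow> real" where
  "return_exponent M = 1 / (4 * (growth_rate M + 1))"

definition return_radius :: "nat \<Rightarrow> real" where
  "return_radius n = 2 * exp (- (3 / 4) * n)"

lemma return_exponent_le: "0 \<le> M \<Longrightarrow> growth_rate M * return_exponent M \<le> 1 / 4"
  using growth_rate_nonneg[of M] by (simp add: return_exponent_def field_simps)

lemma return_radius_eq: "return_radius n = 2 * exp (- (3 / 4)) ^ n"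
  by (simp add: return_radius_def exp_of_nat_mult[symmetric] mult.commute)

lemma displacement_lt_if_short_ball_return:
  assumes x: "x \<in> tame M" "0 \<le> M" and \<rho>: "0 < \<rho>" "\<rho> \<le> exp (- 2)"
    and k: "real k \<le> return_exponent M * - ln \<rho>"
    and y: "y \<in> {0..1}" "\<bar>y - x\<bar> < \<rho>" "\<bar>(T ^^ k) y - x\<bar> < \<rho>"
  shows "\<bar>(T ^^ k) x - x\<bar> < 2 * exp (3 / 4 * ln \<rho>)"
proof -
  define L where "L = - ln \<rho>"
  have \<rho>L: "\<rho> = exp (- L)" using \<rho> by (simp add: L_def)
  have "ln \<rho> \<le> - 2" using \<rho> ln_le_cancel_iff[of \<rho> "exp (- 2)"] by simp
  then have L: "2 \<le> L" by (simp add: L_def)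
  have g: "0 \<le> growth_rate M" using growth_rate_nonneg[OF x(2)] .
  have "growth_rate M * k \<le> growth_rate M * (return_exponent M * L)"
    using k g by (intro mult_left_mono) (simp_all add: L_def)
  also have "\<dots> \<le> L / 4"
    using return_exponent_le[OF x(2)] L by (simp add: mult.assoc[symmetric] mult_right_mono)
  finally have grow: "\<rho> * exp (growth_rate M * k) \<le> exp (- 3 / 4 * L)"
    by (simp add: \<rho>L mult_exp_exp)
  have "exp (- 3 / 4 * L) \<le> exp (- 3 / 2)" using L by simp
  also have "\<dots> < 1 / 2"
    using exp_ge_add_one_self[of "3 / 2 :: real"] by (simp add: exp_minus field_simps)
  finally have small: "\<rho> * exp (growth_rate M * k) < 1 / 2" using grow by linarith
  have "\<bar>(T ^^ k) y - (T ^^ k) x\<bar> \<le> \<rho> * exp (growth_rate M * k)"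
    using tame_shadowing(1)[OF x(1) y(1) _ small] y(2) by simp
  moreover have "\<rho> * 1 \<le> \<rho> * exp (growth_rate M * k)"
    using g \<rho> by (intro mult_left_mono) auto
  ultimately have "\<bar>(T ^^ k) x - x\<bar> < 2 * (\<rho> * exp (growth_rate M * k))"
    using y(3) by linarith
  also have "\<dots> \<le> 2 * exp (- 3 / 4 * L)" using grow by simp
  finally show ?thesis by (simp add: L_def)
qed

lemma diophantine_if_slow_returns:
  assumes x: "x \<in> tame M" "0 \<le> M"
    and slow: "\<forall>\<^sub>F n in sequentially. \<forall>k. 1 \<le> k \<and> real k \<le> return_exponent M * Suc n \<longrightarrow>
      return_radius n \<le> \<bar>(T ^^ k) x - x\<bar>"
  shows "diophantine T x"
proof -
  obtain n0 where n0: "\<And>n k. n0 \<le> n \<Longrightarrow> 1 \<le> k \<Longrightarrow> real k \<le> return_exponent M * Suc n \<Longrightarrow>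
      return_radius n \<le> \<bar>(T ^^ k) x - x\<bar>"
    using slow by (auto simp: eventually_sequentially)
  define \<epsilon> where "\<epsilon> = return_exponent M"
  define \<rho>0 where "\<rho>0 = exp (- (real n0 + 2))"
  have "0 < \<epsilon>"
    using growth_rate_nonneg[OF x(2)] by (auto simp: \<epsilon>_def return_exponent_def field_simps)
  have "{y \<in> {0..1}. (T ^^ k) y \<in> ball x \<rho>} \<inter> ball x \<rho> = {}"
    if \<rho>: "0 < \<rho>" "\<rho> \<le> \<rho>0" and k: "0 < k" "real k \<le> \<epsilon> * \<bar>ln \<rho>\<bar>" for \<rho> k
  proof -
    define L where "L = - ln \<rho>"
    have "ln \<rho> \<le> - (real n0 + 2)" using \<rho> ln_le_cancel_iff[of \<rho> \<rho>0] by (simp add: \<rho>0_def)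
    then have L: "real n0 + 2 \<le> L" by (simp add: L_def)
    have "\<rho> \<le> exp (- 2)" using \<rho> by (simp add: \<rho>0_def order_trans)
    have kL: "real k \<le> return_exponent M * - ln \<rho>" using k L by (simp add: \<epsilon>_def L_def)
    define n where "n = nat \<lfloor>L\<rfloor>"
    have n: "real n \<le> L" "L < real n + 1" "n0 \<le> n" using L by (simp_all add: n_def) linarith+
    have "real k \<le> return_exponent M * L" using kL by (simp add: L_def)
    also have "\<dots> \<le> return_exponent M * Suc n"
      using \<open>0 < \<epsilon>\<close> n(2) by (intro mult_left_mono) (auto simp: \<epsilon>_def)
    finally have "return_radius n \<le> \<bar>(T ^^ k) x - x\<bar>" using n0 n(3) k(1) by simp
    moreover have "2 * exp (3 / 4 * ln \<rho>) \<le> return_radius n"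
      using n(1) by (simp add: return_radius_def L_def)
    ultimately show ?thesis
      using displacement_lt_if_short_ball_return[OF x \<open>0 < \<rho>\<close> \<open>\<rho> \<le> exp (- 2)\<close> kL]
      by (force simp: dist_real_def abs_minus_commute)
  qed
  moreover have "0 < \<rho>0" by (simp add: \<rho>0_def)
  ultimately show ?thesis unfolding diophantine_def using \<open>0 < \<epsilon>\<close> by blast
qed

lemma eventually_expansion_ge_2: "\<forall>\<^sub>F k in sequentially. 2 \<le> C0 * lam ^ k"
proof -
  obtain k0 where k0: "2 / C0 < lam ^ k0" using real_arch_pow[OF lam] by blast
  have "2 \<le> C0 * lam ^ k" if "k0 \<le> k" for k
  proof -
    have "2 / C0 < lam ^ k" using k0 power_increasing[OF that, of lam] lam by linarith
    then show ?thesis using C0 by (simp add: field_simps)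
  qed
  then show ?thesis by (auto simp: eventually_sequentially)
qed

lemma outer_measure_short_near_return:
  assumes "2 \<le> C0 * lam ^ k" "0 \<le> M" and k: "real k \<le> return_exponent M * Suc n"
  shows "outer_measure_of lborel (near_return M k (return_radius n)) \<le> ennreal (144 * exp (- real n / 2))"
proof -
  have "growth_rate M * k \<le> growth_rate M * (return_exponent M * Suc n)"
    using k growth_rate_nonneg[OF \<open>0 \<le> M\<close>] by (intro mult_left_mono) auto
  also have "\<dots> \<le> real (Suc n) / 4"
    using return_exponent_le[OF \<open>0 \<le> M\<close>] by (simp add: mult.assoc[symmetric] mult_right_mono)
  finally have gk: "growth_rate M * k \<le> real (Suc n) / 4" .
  have "outer_measure_of lborel (near_return M k (return_radius n))
      \<le> ennreal (24 * return_radius n * exp (growth_rate M * k))"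
    using assms by (intro outer_measure_near_return) (auto simp: return_radius_def)
  also have "\<dots> \<le> ennreal (144 * exp (- real n / 2))"
  proof (rule ennreal_leI)
    have "24 * return_radius n * exp (growth_rate M * k) = 48 * exp (- (3 / 4) * n + growth_rate M * k)"
      by (simp add: return_radius_def mult_exp_exp)
    also have "\<dots> \<le> 48 * exp (- (3 / 4) * n + real (Suc n) / 4)"
      using gk by simp
    also have "\<dots> = 48 * (exp (1 / 4) * exp (- real n / 2))"
      by (subst mult_exp_exp) (simp add: field_simps)
    also have "\<dots> \<le> 48 * (3 * exp (- real n / 2))"
      using order.trans[OF _ exp_le, of "exp (1 / 4)"] by simp
    finally show "24 * return_radius n * exp (growth_rate M * k) \<le> 144 * exp (- real n / 2)" by simp
  qed
  finally show ?thesis .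
qed

lemma outer_measure_near_returns:
  assumes kmin: "\<forall>k\<ge>kmin. 2 \<le> C0 * lam ^ k" and "0 \<le> M"
  shows "outer_measure_of lborel
      (\<Union>k\<in>{k. kmin \<le> k \<and> real k \<le> return_exponent M * Suc n}. near_return M k (return_radius n))
    \<le> ennreal (576 * exp (- 1 / 4) ^ n)"
proof -
  define K where "K = {k. kmin \<le> k \<and> real k \<le> return_exponent M * Suc n}"
  have "return_exponent M \<le> 1" using growth_rate_nonneg[OF \<open>0 \<le> M\<close>]
    by (simp add: return_exponent_def field_simps)
  have "K \<subseteq> {..Suc n}"
  proof
    fix k assume "k \<in> K"
    then have "real k \<le> return_exponent M * Suc n" by (simp add: K_def)
    also have "\<dots> \<le> 1 * real (Suc n)"
      using \<open>return_exponent M \<le> 1\<close> by (intro mult_right_mono) auto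
    finally show "k \<in> {..Suc n}" by simp
  qed
  then have K: "finite K" "card K \<le> n + 2"
    using finite_subset card_mono[of "{..Suc n}" K] by auto
  have "outer_measure_of lborel (\<Union>k\<in>K. near_return M k (return_radius n))
      \<le> (\<Sum>k\<in>K. outer_measure_of lborel (near_return M k (return_radius n)))"
    using K(1) by (rule outer_measure_of_UN_le) simp
  also have "\<dots> \<le> (\<Sum>k\<in>K. ennreal (144 * exp (- real n / 2)))"
    using kmin \<open>0 \<le> M\<close> by (intro sum_mono outer_measure_short_near_return) (auto simp: K_def)
  also have "\<dots> = ennreal (card K * (144 * exp (- real n / 2)))"
    by (simp add: ennreal_mult ennreal_of_nat_eq_real_of_nat)
  also have "\<dots> \<le> ennreal (576 * exp (- 1 / 4) ^ n)"
  proof (rule ennreal_leI)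
    have "real (card K) \<le> 4 * exp (n / 4)"
      using K(2) exp_ge_add_one_self[of "n / 4"] by linarith
    then have "card K * (144 * exp (- real n / 2)) \<le> 4 * exp (n / 4) * (144 * exp (- real n / 2))"
      by (intro mult_right_mono) auto
    also have "\<dots> = 576 * exp (- 1 / 4) ^ n"
      by (simp add: exp_of_nat_mult[symmetric] mult_exp_exp field_simps)
    finally show "card K * (144 * exp (- real n / 2)) \<le> 576 * exp (- 1 / 4) ^ n" .
  qed
  finally show ?thesis by (simp add: K_def)
qed

lemma slow_returns_if_aperiodic:
  assumes x: "x \<in> tame M" and aperiodic: "\<forall>k\<ge>1. (T ^^ k) x \<noteq> x"
    and far: "\<forall>\<^sub>F n in sequentially. \<forall>k. kmin \<le> k \<and> real k \<le> return_exponent M * Suc n \<longrightarrow>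
      x \<notin> near_return M k (return_radius n)"
  shows "\<forall>\<^sub>F n in sequentially. \<forall>k. 1 \<le> k \<and> real k \<le> return_exponent M * Suc n \<longrightarrow>
    return_radius n \<le> \<bar>(T ^^ k) x - x\<bar>"
proof -
  \<comment> \<open>returns before time \<open>kmin\<close> are bounded away from \<open>0\<close> because \<open>x\<close> is not periodic\<close>
  define \<delta> where "\<delta> = Min (insert 1 ((\<lambda>k. \<bar>(T ^^ k) x - x\<bar>) ` {1..<kmin}))"
  have "0 < \<delta>" using aperiodic by (simp add: \<delta>_def)
  have \<delta>_le: "\<delta> \<le> \<bar>(T ^^ k) x - x\<bar>" if "1 \<le> k" "k < kmin" for k
    unfolding \<delta>_def using that by (intro Min_le) auto
  have "(\<lambda>n. 2 * exp (- (3 / 4 :: real)) ^ n) \<longlonglongrightarrow> 2 * 0"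
    by (intro tendsto_intros) simp
  then have "\<forall>\<^sub>F n in sequentially. 2 * exp (- (3 / 4 :: real)) ^ n < \<delta>"
    by (rule order_tendstoD(2)) (use \<open>0 < \<delta>\<close> in simp)
  then have "\<forall>\<^sub>F n in sequentially. return_radius n < \<delta>"
    by (simp add: return_radius_eq)
  with far show ?thesis
  proof eventually_elim
    case (elim n)
    show ?case
    proof (intro allI impI)
      fix k assume k: "1 \<le> k \<and> real k \<le> return_exponent M * Suc n"
      show "return_radius n \<le> \<bar>(T ^^ k) x - x\<bar>"
      proof (cases "k < kmin")
        case True
        then show ?thesis using elim(2) \<delta>_le[of k] k by simp
      next
        case False
        then have "x \<notin> near_return M k (return_radius n)" using elim(1) k by simp
        then show ?thesis using x by (simp add: near_return_def)
      qed
    qed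
  qed
qed

end

locale piecewise_expanding_acip = piecewise_expanding_map +
  fixes \<mu> :: "real measure" and Cp \<gamma> :: real
  assumes acip: "acip_ergodic T \<mu>" and Cp: "0 < Cp" and \<gamma>: "0 < \<gamma>"
    and measure_near_sing_set: "\<And>\<epsilon>. 0 < \<epsilon> \<Longrightarrow> measure \<mu> {x. infdist x (sing_set a N) < \<epsilon>} < Cp * \<epsilon> powr \<gamma>"
begin

lemma prob_space_\<mu>: "prob_space \<mu>" and sets_\<mu>: "sets \<mu> = sets borel"
  using acip by (auto simp: acip_ergodic_def)

lemma space_\<mu>: "space \<mu> = UNIV"
  using sets_eq_imp_space_eq[OF sets_\<mu>] by simp

lemma borel_measurable_\<mu>_iff: "f \<in> borel_measurable \<mu> \<longleftrightarrow> f \<in> borel_measurable borel"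
  using measurable_cong_sets[OF sets_\<mu> refl] by blast

sublocale measure_preserving \<mu> T
proof -
  interpret prob_space \<mu> by (rule prob_space_\<mu>)
  show "measure_preserving \<mu> T"
    using acip finite_measure_axioms
    by (simp add: measure_preserving_def measure_preserving_axioms_def acip_ergodic_def)
qed

lemma AE_\<mu>_if_AE_lborel: "AE x in lborel. P x \<Longrightarrow> AE x in \<mu>. P x"
  using acip by (auto simp: acip_ergodic_def absolutely_continuous_def eventually_ae_filter space_\<mu>)

lemma AE_in_unit: "AE x in \<mu>. x \<in> {0..1}"
proof -
  interpret prob_space \<mu> by (rule prob_space_\<mu>)
  show ?thesis using acip by (intro AE_prob_1) (simp add: acip_ergodic_def measure_def)
qed

lemma AE_orbit_avoids_sing_set: "AE x in \<mu>. \<forall>l. (T ^^ l) x \<notin> S"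
proof -
  have "AE x in \<mu>. x \<notin> S"
    using AE_not_in[OF countable_imp_null_set_lborel[OF countable_sing_set]] by (rule AE_\<mu>_if_AE_lborel)
  then have "AE x in distr \<mu> \<mu> (T ^^ l). x \<notin> S" for l
    by (subst distr_funpow)
  then have "AE x in \<mu>. (T ^^ l) x \<notin> S" for l
    by (rule AE_distrD[OF measurable_funpow])
  then show ?thesis by (simp add: AE_all_countable)
qed

lemma integrable_neg_log_infdist: "integrable \<mu> neg_log_infdist"
proof (rule integrable_of_summable_measure_gt)
  show "finite_measure \<mu>" by unfold_locales
  have infdist: "(\<lambda>z. infdist z S) \<in> borel_measurable borel"
    by (intro borel_measurable_continuous_onI continuous_intros)
  then have "neg_log_infdist \<in> borel_measurable borel"
    unfolding neg_log_infdist_def[abs_def] by measurable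
  then show "neg_log_infdist \<in> borel_measurable \<mu>"
    by (simp add: borel_measurable_\<mu>_iff)
  show "0 \<le> neg_log_infdist x" for x by (rule neg_log_infdist_nonneg)
  have level: "measure \<mu> {x \<in> space \<mu>. real n < neg_log_infdist x} \<le> Cp * exp (- \<gamma>) ^ n" for n
  proof -
    have "{x \<in> space \<mu>. real n < neg_log_infdist x} \<subseteq> {x. infdist x S < exp (- real n)}"
    proof safe
      fix x assume "real n < neg_log_infdist x"
      then have ln: "ln (infdist x S) < - real n" by (simp add: neg_log_infdist_def)
      then have "infdist x S \<noteq> 0" by auto
      then have "0 < infdist x S" using infdist_nonneg[of x S] by linarith
      then show "infdist x S < exp (- real n)" using ln by (metis exp_less_mono exp_ln)
    qed
    then have "measure \<mu> {x \<in> space \<mu>. real n < neg_log_infdist x} \<le> measure \<mu> {x. infdist x S < exp (- real n)}"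
      using infdist sets_\<mu> by (intro finite_measure_mono) (auto simp: pred_def)
    also have "\<dots> < Cp * exp (- real n) powr \<gamma>" by (rule measure_near_sing_set) simp
    also have "\<dots> = Cp * exp (- \<gamma>) ^ n"
      by (simp add: powr_def exp_of_nat_mult[symmetric] mult.commute)
    finally show ?thesis by (rule less_imp_le)
  qed
  have "summable (\<lambda>n. Cp * exp (- \<gamma>) ^ n)"
    using \<gamma> by (intro summable_mult summable_geometric) simp
  then show "summable (\<lambda>n. measure \<mu> {x \<in> space \<mu>. real n < neg_log_infdist x})"
    by (rule summable_comparison_test') (use level in simp)
qed

lemma AE_tame: "AE x in \<mu>. \<exists>M::nat. x \<in> tame (real M)"
  using AE_in_unit AE_orbit_avoids_sing_set
    AE_birkhoff_sum_le_linear[OF integrable_neg_log_infdist neg_log_infdist_nonneg]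
proof eventually_elim
  case (elim x)
  then obtain M :: nat where "\<forall>m. birkhoff_sum T neg_log_infdist m x \<le> real M * real m" by blast
  then show ?case using elim by (auto simp: tame_def)
qed

lemma AE_not_periodic_tame: "AE x in \<mu>. \<forall>M::nat. \<forall>k\<ge>1. x \<in> tame M \<longrightarrow> (T ^^ k) x \<noteq> x"
proof -
  obtain kmin where kmin: "\<forall>k\<ge>kmin. 2 \<le> C0 * lam ^ k"
    using eventually_expansion_ge_2 by (auto simp: eventually_sequentially)
  have "AE x in lborel. 1 \<le> k \<longrightarrow> x \<in> tame M \<longrightarrow> (T ^^ k) x \<noteq> x" for M :: nat and k
  proof (cases "1 \<le> k")
    case True
    \<comment> \<open>a point of period \<open>k\<close> also has period \<open>q\<close>, at which \<open>T ^^ q\<close> expands by a factor \<open>\<ge> 2\<close>\<close>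
    define q where "q = k * Suc kmin"
    have "1 * Suc kmin \<le> k * Suc kmin" using True by (rule mult_le_mono1)
    then have q: "2 \<le> C0 * lam ^ q" using kmin by (simp add: q_def)
    define c where "c n = 24 * (1 / 2) ^ n * exp (growth_rate M * q)" for n
    have periodic: "x \<in> near_return M q ((1 / 2) ^ n)" if "x \<in> tame M" "(T ^^ k) x = x" for x n
    proof -
      have "(T ^^ q) x = x"
        using funpow_fixed_point[of "T ^^ k" x "Suc kmin"] that(2) by (simp add: q_def funpow_mult)
      then show ?thesis using that(1) by (simp add: near_return_def)
    qed
    have "AE x in lborel. \<forall>\<^sub>F n in sequentially. x \<notin> near_return M q ((1 / 2) ^ n)"
    proof (rule AE_eventually_notin_of_summable_outer_measure)
      show "outer_measure_of lborel (near_return M q ((1 / 2) ^ n)) \<le> ennreal (c n)" for n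
        using outer_measure_near_return[OF q, of M "(1 / 2) ^ n"] by (simp add: c_def)
      show "0 \<le> c n" for n by (simp add: c_def)
      show "summable c"
        unfolding c_def by (intro summable_mult2 summable_mult summable_geometric) simp
    qed simp
    then show ?thesis
      by eventually_elim (use periodic in \<open>auto simp: eventually_sequentially\<close>)
  qed simp
  then have "AE x in \<mu>. 1 \<le> k \<longrightarrow> x \<in> tame M \<longrightarrow> (T ^^ k) x \<noteq> x" for M :: nat and k
    by (rule AE_\<mu>_if_AE_lborel)
  then show ?thesis by (simp add: AE_all_countable)
qed

lemma AE_eventually_not_near_return:
  assumes kmin: "\<forall>k\<ge>kmin. 2 \<le> C0 * lam ^ k"
  shows "AE x in \<mu>. \<forall>M::nat. \<forall>\<^sub>F n in sequentially.
    \<forall>k. kmin \<le> k \<and> real k \<le> return_exponent M * Suc n \<longrightarrow> x \<notin> near_return M k (return_radius n)"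
proof -
  have null: "AE x in lborel. \<forall>\<^sub>F n in sequentially.
      x \<notin> (\<Union>k\<in>{k. kmin \<le> k \<and> real k \<le> return_exponent M * Suc n}. near_return M k (return_radius n))"
    for M :: nat
    using outer_measure_near_returns[OF kmin, where M = "real M"]
    by (intro AE_eventually_notin_of_summable_outer_measure[where c = "\<lambda>n. 576 * exp (- 1 / 4) ^ n"])
      (auto intro: summable_mult summable_geometric)
  have "AE x in \<mu>. \<forall>\<^sub>F n in sequentially.
      \<forall>k. kmin \<le> k \<and> real k \<le> return_exponent M * Suc n \<longrightarrow> x \<notin> near_return M k (return_radius n)"
    for M :: nat
    using AE_\<mu>_if_AE_lborel[OF null] by (rule eventually_mono) (auto elim!: eventually_mono)
  then show ?thesis by (simp add: AE_all_countable)
qed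

lemma AE_slow_returns:
  "AE x in \<mu>. \<forall>M::nat. x \<in> tame M \<longrightarrow> (\<forall>\<^sub>F n in sequentially.
     \<forall>k. 1 \<le> k \<and> real k \<le> return_exponent M * Suc n \<longrightarrow> return_radius n \<le> \<bar>(T ^^ k) x - x\<bar>)"
proof -
  obtain kmin where kmin: "\<forall>k\<ge>kmin. 2 \<le> C0 * lam ^ k"
    using eventually_expansion_ge_2 by (auto simp: eventually_sequentially)
  show ?thesis
    using AE_eventually_not_near_return[OF kmin] AE_not_periodic_tame
    by eventually_elim (blast intro: slow_returns_if_aperiodic)
qed

end

theorem proposition4p5:
  fixes T :: "real \<Rightarrow> real" and a :: "nat \<Rightarrow> real" and N :: enat and \<mu> :: "real measure"
  assumes "piecewise_expanding T a N"
    and "PE1 T a N" and "PE2 T a N"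
    and "acip_ergodic T \<mu>"
    and "PE3 T \<mu>" and "PE4 \<mu> (sing_set a N)"
  shows "AE x in \<mu>. diophantine T x"
proof -
  obtain C0 lam where "0 < C0" "1 < lam"
    and "\<forall>n x. (\<forall>i<n. (T ^^ i) x \<in> {0..1} - sing_set a N) \<longrightarrow> C0 * lam ^ n \<le> \<bar>deriv (T ^^ n) x\<bar>"
    using assms(1) by (auto simp: piecewise_expanding_def)
  moreover obtain C1 where "0 < C1"
    and "\<forall>j. enat j < N \<longrightarrow> (\<forall>x\<in>branch a j. \<bar>deriv (deriv T) x\<bar> / \<bar>deriv T x\<bar>\<^sup>2 < C1)"
    using assms(2) by (auto simp: PE1_def)
  moreover obtain Cp \<gamma> where "0 < Cp" "0 < \<gamma>"
    and "\<forall>\<epsilon>>0. measure \<mu> {x. infdist x (sing_set a N) < \<epsilon>} < Cp * \<epsilon> powr \<gamma>"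
    using assms(6) by (auto simp: PE4_def)
  ultimately interpret piecewise_expanding_acip T a N C0 lam C1 \<mu> Cp \<gamma>
    using assms(1,4) by unfold_locales (auto simp: piecewise_expanding_def)
  show ?thesis
    using AE_tame AE_slow_returns
  proof eventually_elim
    case (elim x)
    then obtain M :: nat where "x \<in> tame M" by blast
    then show ?case using elim(2) by (intro diophantine_if_slow_returns) auto
  qed
qed

end
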